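(* Let $k$ be a field, $r \ge 1$, $s \le r$, and $x_1,\dots,x_r \in k$. For $1 \le j \le r$ and $d \ge 0$, let $e^d_{r,j}$ be the elementary symmetric polynomial of degree $d$ in the $r-1$ variables $x_1,\dots,x_r$ with $x_j$ omitted, and let $A_r^s(x_1,\dots,x_r)$ be the $s \times r$ matrix whose $(d+1,j)$ entry is $e^d_{r,j}(x_1,\dots,x_r)$ for $0 \le d \le s-1$, $1 \le j \le r$. Then $A_r^s(x_1,\dots,x_r)$ has full rank (rank $s$) if and only if $\#\{x_1,\dots,x_r\} \ge s$. *)

theory Defs
  imports "Jordan_Normal_Form.DL_Rank"
begin

definition esym_val :: "nat \<Rightarrow> nat set \<Rightarrow> (nat \<Rightarrow> 'k::field) \<Rightarrow> 'k" where
  "esym_val d I x = (\<Sum>S \<in> {S. S \<subseteq> I \<and> card S = d}. \<Prod>i\<in>S. x i)"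

text \<open>The s x r matrix A_r^s(x_1..x_r); variables indexed 1..r, matrix entries 0-based:
  entry (d, j-1) = e^d_{r,j} = esym of degree d in the x_i with i in {1..r}-{j}.\<close>
definition A_mat :: "nat \<Rightarrow> nat \<Rightarrow> (nat \<Rightarrow> 'k::field) \<Rightarrow> 'k mat" where
  "A_mat r s x = mat s r (\<lambda>(d, j). esym_val d ({1..r} - {j + 1}) x)"

end

theory Submission
  imports Defs "HOL-Computational_Algebra.Polynomial" "Jordan_Normal_Form.DL_Rank_Submatrix"
begin

text \<open>Removing the variable \<open>x\<^sub>j\<close> divides the generating polynomial \<open>\<Prod>(1 + x\<^sub>i t)\<close> by
  \<open>1 + x\<^sub>j t\<close>, so \<open>e\<^sub>d\<close> without \<open>x\<^sub>j\<close> is \<open>\<Sum>\<^sub>k e\<^sub>d\<^sub>-\<^sub>k (-x\<^sub>j)\<^sup>k\<close>. Hence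
  \<open>A\<^sub>r\<^sup>s = T V\<close> with \<open>T\<close> lower unitriangular (entries \<open>e\<^sub>d\<^sub>-\<^sub>k(x\<^sub>1,\<dots>,x\<^sub>r)\<close>) and
  \<open>V\<close> the \<open>s \<times> r\<close> Vandermonde matrix of the values \<open>-x\<^sub>j\<close>. The number of distinct
  columns of \<open>V\<close> bounds the rank, and \<open>s\<close> distinct values give an invertible
  \<open>s \<times> s\<close> Vandermonde minor.\<close>

lemma esym_val_0:
  assumes "finite I"
  shows "esym_val 0 I x = 1"
proof -
  have "{S. S \<subseteq> I \<and> card S = 0} = {{}}" using assms by (auto dest: finite_subset)
  then show ?thesis unfolding esym_val_def by simp
qed

lemma subsets_insert_card_Suc:
  assumes "finite I" "j \<notin> I"
  shows "{S. S \<subseteq> insert j I \<and> card S = Suc n} =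
    {S. S \<subseteq> I \<and> card S = Suc n} \<union> insert j ` {S. S \<subseteq> I \<and> card S = n}"
proof (intro equalityI subsetI)
  fix S assume "S \<in> {S. S \<subseteq> insert j I \<and> card S = Suc n}"
  then have S: "S \<subseteq> insert j I" "card S = Suc n" "finite S"
    using assms finite_subset by auto
  show "S \<in> {S. S \<subseteq> I \<and> card S = Suc n} \<union> insert j ` {S. S \<subseteq> I \<and> card S = n}"
  proof (cases "j \<in> S")
    case True
    then have "S = insert j (S - {j})" "S - {j} \<subseteq> I" "card (S - {j}) = n" using S by auto
    then show ?thesis by blast
  qed (use S in auto)
next
  fix S assume "S \<in> {S. S \<subseteq> I \<and> card S = Suc n} \<union> insert j ` {S. S \<subseteq> I \<and> card S = n}"
  then show "S \<in> {S. S \<subseteq> insert j I \<and> card S = Suc n}"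
    using assms by (auto simp: finite_subset card_insert_if)
qed

lemma esym_val_Suc_insert:
  assumes "finite I" "j \<notin> I"
  shows "esym_val (Suc n) (insert j I) x = esym_val (Suc n) I x + x j * esym_val n I x"
proof -
  let ?big = "{S. S \<subseteq> I \<and> card S = Suc n}" and ?small = "{S. S \<subseteq> I \<and> card S = n}"
  have disj: "?big \<inter> insert j ` ?small = {}" using assms by auto
  have inj: "inj_on (insert j) ?small"
    using assms by (intro inj_onI) (metis Diff_insert_absorb mem_Collect_eq subset_iff)
  have "esym_val (Suc n) (insert j I) x
      = esym_val (Suc n) I x + (\<Sum>S \<in> insert j ` ?small. \<Prod>i\<in>S. x i)"
    unfolding esym_val_def subsets_insert_card_Suc[OF assms]
    using assms disj by (intro sum.union_disjoint) auto
  also have "(\<Sum>S \<in> insert j ` ?small. \<Prod>i\<in>S. x i) = (\<Sum>S \<in> ?small. x j * (\<Prod>i\<in>S. x i))"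
    unfolding sum.reindex[OF inj] o_def
    using assms by (intro sum.cong refl, subst prod.insert) (auto dest: finite_subset)
  also have "\<dots> = x j * esym_val n I x" unfolding esym_val_def by (simp add: sum_distrib_left)
  finally show ?thesis .
qed

lemma esym_val_Diff_singleton:
  assumes "finite I" "j \<in> I"
  shows "esym_val d (I - {j}) x = (\<Sum>k\<le>d. esym_val (d - k) I x * (- x j) ^ k)"
proof (induction d)
  case 0
  then show ?case using assms by (simp add: esym_val_0)
next
  case (Suc d)
  have "esym_val (Suc d) I x = esym_val (Suc d) (I - {j}) x + x j * esym_val d (I - {j}) x"
    using esym_val_Suc_insert[of "I - {j}" j d x] assms by (simp add: insert_absorb)
  then have "esym_val (Suc d) (I - {j}) x
      = esym_val (Suc d) I x + (- x j) * (\<Sum>k\<le>d. esym_val (d - k) I x * (- x j) ^ k)"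
    unfolding Suc by simp
  also have "\<dots> = (\<Sum>k\<le>Suc d. esym_val (Suc d - k) I x * (- x j) ^ k)"
    by (subst sum.atMost_Suc_shift) (simp add: sum_distrib_left mult_ac)
  finally show ?case .
qed

definition vandermonde_mat :: "nat \<Rightarrow> nat \<Rightarrow> (nat \<Rightarrow> 'a::comm_ring_1) \<Rightarrow> 'a mat" where
  "vandermonde_mat n m y = mat n m (\<lambda>(k, a). y a ^ k)"

lemma vandermonde_mat_carrier [simp]: "vandermonde_mat n m y \<in> carrier_mat n m"
  unfolding vandermonde_mat_def by simp

text \<open>A null vector of the transpose is the coefficient vector of a polynomial of degree
  below \<open>n\<close> vanishing at the \<open>n\<close> distinct points \<open>y a\<close>.\<close>

lemma det_vandermonde_mat_nonzero:
  fixes y :: "nat \<Rightarrow> 'a::field"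
  assumes inj: "inj_on y {..<n}"
  shows "det (vandermonde_mat n n y) \<noteq> 0"
proof
  let ?V = "vandermonde_mat n n y"
  assume "det ?V = 0"
  then have "det (transpose_mat ?V) = 0" using det_transpose[of ?V n] by simp
  then obtain v where v: "v \<in> carrier_vec n" "v \<noteq> 0\<^sub>v n" "transpose_mat ?V *\<^sub>v v = 0\<^sub>v n"
    using det_0_iff_vec_prod_zero_field[of "transpose_mat ?V" n] by auto
  obtain k0 where k0: "k0 < n" "v $ k0 \<noteq> 0"
    using v(1,2) by (metis carrier_vecD eq_vecI index_zero_vec(1,2))
  define p where "p = (\<Sum>k<n. monom (v $ k) k)"
  have coeff: "coeff p i = (if i < n then v $ i else 0)" for i
    unfolding p_def coeff_sum coeff_monom by (auto simp: sum.delta)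
  have "p \<noteq> 0" using coeff[of k0] k0 by auto
  have "degree p < n"
    using k0 by (intro degree_lessI) (auto simp: coeff)
  have "poly p (y a) = 0" if "a < n" for a
  proof -
    have "(\<Sum>k<n. y a ^ k * v $ k) = (transpose_mat ?V *\<^sub>v v) $ a"
      using that v(1)
      by (simp add: vandermonde_mat_def scalar_prod_def row_def atLeast0LessThan)
    then show ?thesis using v(3) that unfolding p_def poly_sum poly_monom by (simp add: mult.commute)
  qed
  then have "y ` {..<n} \<subseteq> {z. poly p z = 0}" by auto
  then have "card (y ` {..<n}) \<le> card {z. poly p z = 0}"
    using poly_roots_finite[OF \<open>p \<noteq> 0\<close>] by (rule card_mono[rotated])
  then have "n \<le> degree p" using card_image[OF inj] card_poly_roots_bound[OF \<open>p \<noteq> 0\<close>] by simp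
  then show False using \<open>degree p < n\<close> by simp
qed

lemma submatrix_vandermonde_mat_UNIV:
  "submatrix (vandermonde_mat n m y) UNIV J
    = vandermonde_mat n (card {j. j < m \<and> j \<in> J}) (\<lambda>a. y (pick J a))"
  by (rule eq_matI) (auto simp: submatrix_def vandermonde_mat_def pick_UNIV pick_le)

lemma set_cols_vandermonde_mat:
  "set (cols (vandermonde_mat n m y)) = (\<lambda>c. vec n (\<lambda>k. c ^ k)) ` y ` {..<m}"
  by (force simp: cols_def vandermonde_mat_def)

lemma submatrix_mult_UNIV:
  assumes "A \<in> carrier_mat n k" "B \<in> carrier_mat k m"
  shows "submatrix (A * B) UNIV J = A * submatrix B UNIV J"
  using assms by (intro eq_matI) (auto simp: submatrix_def pick_UNIV pick_le col_def intro!: arg_cong[where f = "scalar_prod _"])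

lemma set_cols_mult:
  assumes "A \<in> carrier_mat n k" "B \<in> carrier_mat k m"
  shows "set (cols (A * B)) = (\<lambda>v. A *\<^sub>v v) ` set (cols B)"
  using assms by (force simp: cols_def)

lemma (in vec_space) rank_le_nr:
  assumes "A \<in> carrier_mat n nc"
  shows "rank A \<le> n"
proof -
  have "set (cols A) \<subseteq> carrier_vec n" using assms cols_dim by blast
  then show ?thesis unfolding rank_def
    using subspace_dim[OF span_is_subspace fin_dim fin_dim_span_cols[OF assms]] dim_is_n
    by simp
qed

lemma (in vec_space) rank_le_card_set_cols:
  assumes "A \<in> carrier_mat n nc"
  shows "rank A \<le> card (set (cols A))"
proof -
  obtain S where S: "maximal S (\<lambda>T. T \<subseteq> set (cols A) \<and> lin_indpt T)"
    using maximal_exists[of "\<lambda>T. T \<subseteq> set (cols A) \<and> lin_indpt T" "card (set (cols A))" "{}"]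
    by (meson List.finite_set card_mono empty_iff empty_subsetI finite_lin_indpt2 rev_finite_subset)
  then have "card S \<le> card (set (cols A))" by (simp add: card_mono maximal_def)
  then show ?thesis using rank_card_indpt[OF assms S] by simp
qed

lemma (in vec_space) rank_mult_vandermonde_mat_le:
  assumes "T \<in> carrier_mat n n"
  shows "rank (T * vandermonde_mat n m y) \<le> card (y ` {..<m})"
proof -
  let ?V = "vandermonde_mat n m y"
  have "rank (T * ?V) \<le> card (set (cols (T * ?V)))"
    using assms by (intro rank_le_card_set_cols) auto
  also have "\<dots> \<le> card (set (cols ?V))"
    unfolding set_cols_mult[OF assms vandermonde_mat_carrier] by (rule card_image_le) simp
  also have "\<dots> \<le> card (y ` {..<m})"
    unfolding set_cols_vandermonde_mat by (rule card_image_le) simp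
  finally show ?thesis .
qed

lemma (in vec_space) rank_mult_vandermonde_mat_full:
  assumes T: "T \<in> carrier_mat n n" "det T \<noteq> 0" and card: "n \<le> card (y ` {..<m})"
  shows "rank (T * vandermonde_mat n m y) = n"
proof -
  let ?V = "vandermonde_mat n m y"
  obtain S where "S \<subseteq> y ` {..<m}" "card S = n" using obtain_subset_with_card_n[OF card] by blast
  then obtain J where J: "J \<subseteq> {..<m}" "inj_on y J" "card J = n"
    by (metis subset_image_inj card_image)
  then have cols_J: "{j. j < m \<and> j \<in> J} = J" by auto
  have "inj_on (\<lambda>a. y (pick J a)) {..<n}"
  proof (rule inj_onI)
    fix a b assume "a \<in> {..<n}" "b \<in> {..<n}" "y (pick J a) = y (pick J b)"
    then have "pick J a = pick J b"
      using J(2,3) pick_in_set[of _ J] by (auto dest: inj_onD)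
    then show "a = b"
      using \<open>a \<in> {..<n}\<close> \<open>b \<in> {..<n}\<close> J(3) pick_mono[of _ J] by (metis lessThan_iff nat_neq_iff)
  qed
  then have "det (submatrix (T * ?V) UNIV J) \<noteq> 0"
    using T J(3) det_vandermonde_mat_nonzero
    by (simp add: submatrix_mult_UNIV[OF T(1) vandermonde_mat_carrier] submatrix_vandermonde_mat_UNIV
        cols_J det_mult[OF T(1)])
  then have "n \<le> rank (T * ?V)"
    using rank_gt_minor[of "T * ?V" m UNIV J] T(1) J(3) cols_J by auto
  moreover have "rank (T * ?V) \<le> n" using T(1) by (intro rank_le_nr) auto
  ultimately show ?thesis by simp
qed

definition esym_toeplitz_mat :: "nat set \<Rightarrow> nat \<Rightarrow> (nat \<Rightarrow> 'k::field) \<Rightarrow> 'k mat" where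
  "esym_toeplitz_mat I n x = mat n n (\<lambda>(d, k). if k \<le> d then esym_val (d - k) I x else 0)"

lemma esym_toeplitz_mat_carrier [simp]: "esym_toeplitz_mat I n x \<in> carrier_mat n n"
  unfolding esym_toeplitz_mat_def by simp

lemma det_esym_toeplitz_mat:
  assumes "finite I"
  shows "det (esym_toeplitz_mat I n x) = 1"
proof -
  have "det (esym_toeplitz_mat I n x) = prod_list (diag_mat (esym_toeplitz_mat I n x))"
    by (rule det_lower_triangular[of n]) (auto simp: esym_toeplitz_mat_def)
  also have "\<dots> = 1" unfolding prod_list_diag_prod
    using assms by (intro prod.neutral) (auto simp: esym_toeplitz_mat_def esym_val_0)
  finally show ?thesis .
qed

lemma A_mat_factorization:
  "A_mat r s x = esym_toeplitz_mat {1..r} s x * vandermonde_mat s r (\<lambda>j. - x (Suc j))"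
proof (rule eq_matI)
  fix d j assume "d < dim_row (esym_toeplitz_mat {1..r} s x * vandermonde_mat s r (\<lambda>j. - x (Suc j)))"
    and "j < dim_col (esym_toeplitz_mat {1..r} s x * vandermonde_mat s r (\<lambda>j. - x (Suc j)))"
  then have d: "d < s" and j: "j < r" by (auto simp: esym_toeplitz_mat_def vandermonde_mat_def)
  let ?E = "\<lambda>k. esym_val k {1..r} x" and ?y = "- x (Suc j)"
  have "A_mat r s x $$ (d, j) = (\<Sum>k\<le>d. ?E (d - k) * ?y ^ k)"
    using d j esym_val_Diff_singleton[of "{1..r}" "Suc j" d x] by (simp add: A_mat_def)
  also have "\<dots> = (\<Sum>k<s. (if k \<le> d then ?E (d - k) else 0) * ?y ^ k)"
    using d by (intro sum.mono_neutral_cong_left) auto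
  also have "\<dots> = (esym_toeplitz_mat {1..r} s x * vandermonde_mat s r (\<lambda>j. - x (Suc j))) $$ (d, j)"
    using d j by (simp add: esym_toeplitz_mat_def vandermonde_mat_def scalar_prod_def row_def col_def
        atLeast0LessThan del: One_nat_def)
  finally show "A_mat r s x $$ (d, j)
      = (esym_toeplitz_mat {1..r} s x * vandermonde_mat s r (\<lambda>j. - x (Suc j))) $$ (d, j)" .
qed (simp_all add: A_mat_def esym_toeplitz_mat_def vandermonde_mat_def)

theorem corollary2p4:
  fixes x :: "nat \<Rightarrow> 'k::field" and r s :: nat
  assumes "r \<ge> 1" and "s \<le> r"
  shows "vec_space.rank s (A_mat r s x) = s \<longleftrightarrow> card (x ` {1..r}) \<ge> s"
proof -
  let ?T = "esym_toeplitz_mat {1..r} s x" and ?y = "\<lambda>j. - x (Suc j)"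
  have "?y ` {..<r} = uminus ` x ` {1..r}"
    by (simp only: image_Suc_lessThan[symmetric] image_image)
  then have card: "card (?y ` {..<r}) = card (x ` {1..r})"
    by (simp add: card_image)
  have "det ?T \<noteq> 0" by (simp add: det_esym_toeplitz_mat)
  then show ?thesis
    using vec_space.rank_mult_vandermonde_mat_le[of ?T s r ?y]
      vec_space.rank_mult_vandermonde_mat_full[of ?T s ?y r]
    unfolding A_mat_factorization card by fastforce
qed

end
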